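(* Let $A \in \mathbb{R}^{m \times n}$ have full column rank and let $p \in [1,\infty]$. Then there exists an invertible matrix $R \in \mathbb{R}^{n \times n}$ such that $\bar\kappa_p(A R^{-1}) \le n$.
   Context: For $p\in[1,\infty]$ let $q$ be the dual exponent ($1/p+1/q=1$), so $\|\cdot\|_q$ is the dual norm of $\|\cdot\|_p$. For a matrix $M \in \mathbb{R}^{m \times n}$, write $|M|_p = (\sum_{i,j}|M_{ij}|^p)^{1/p}$ for the entrywise $\ell_p$ norm (the maximum absolute entry if $p=\infty$). $M$ is called $(\alpha,\beta,p)$-conditioned if (1) $|M|_p \le \alpha$ and (2) $\|z\|_q \le \beta \|Mz\|_p$ for all $z\in\mathbb{R}^n$. The $(\alpha,\beta,p)$-condition number $\bar\kappa_p(M)$ is the minimum (infimum) of $\alpha\beta$ over all $(\alpha,\beta)$ for which $M$ is $(\alpha,\beta,p)$-conditioned. *)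

theory Defs
  imports "HOL-Analysis.Analysis"
begin

text \<open>Exponents p are elements of [1,\<infinity>], represented as extended reals with p \<ge> 1.\<close>

definition dual_exp :: "ereal \<Rightarrow> ereal" where
  "dual_exp p = (if p = \<infinity> then 1 else if p = 1 then \<infinity>
                 else ereal (real_of_ereal p / (real_of_ereal p - 1)))"

definition lp_norm :: "ereal \<Rightarrow> 'a set \<Rightarrow> ('a \<Rightarrow> real) \<Rightarrow> real" where
  "lp_norm p I f = (if p = \<infinity> then Max ((\<lambda>i. \<bar>f i\<bar>) ` I)
     else (\<Sum>i\<in>I. \<bar>f i\<bar> powr real_of_ereal p) powr (1 / real_of_ereal p))"

definition vec_pnorm :: "ereal \<Rightarrow> real^'n \<Rightarrow> real" where
  "vec_pnorm p x = lp_norm p UNIV (\<lambda>i. x $ i)"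

definition entry_pnorm :: "ereal \<Rightarrow> real^'n^'m \<Rightarrow> real" where
  "entry_pnorm p M = lp_norm p UNIV (\<lambda>(i, j). M $ i $ j)"

definition conditioned :: "real \<Rightarrow> real \<Rightarrow> ereal \<Rightarrow> real^'n^'m \<Rightarrow> bool" where
  "conditioned \<alpha> \<beta> p M \<longleftrightarrow> entry_pnorm p M \<le> \<alpha> \<and>
     (\<forall>z::real^'n. vec_pnorm (dual_exp p) z \<le> \<beta> * vec_pnorm p (M *v z))"

definition cond_number :: "ereal \<Rightarrow> real^'n^'m \<Rightarrow> real" where
  "cond_number p M = Inf {\<alpha> * \<beta> | \<alpha> \<beta>. conditioned \<alpha> \<beta> p M}"

end

theory Submission imports Defs begin

text \<open>Among the matrices \<open>C\<close> whose columns are mapped by \<open>A\<close> into the unit \<open>\<ell>\<^sub>p\<close> ball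
  (a compact set, as \<open>A\<close> is injective) choose one maximising \<open>\<bar>det C\<bar>\<close>. By Cramer's rule,
  maximality yields \<open>\<bar>z\<^sub>j\<bar> \<le> \<parallel>A C z\<parallel>\<^sub>p\<close> for every \<open>z\<close>: the columns of \<open>A C\<close> form an Auerbach
  basis of the column space. Hence \<open>\<bar>A C\<bar>\<^sub>p \<le> n\<^sup>1\<^sup>/\<^sup>p\<close> and \<open>\<parallel>z\<parallel>\<^sub>q \<le> n\<^sup>1\<^sup>/\<^sup>q \<parallel>A C z\<parallel>\<^sub>p\<close>,
  so \<open>R = C\<^sup>-\<^sup>1\<close> works since \<open>n\<^sup>1\<^sup>/\<^sup>p n\<^sup>1\<^sup>/\<^sup>q = n\<close>.\<close>

lemma ereal_ge1_cases:
  assumes "1 \<le> (p::ereal)"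
  obtains "p = \<infinity>" | r where "p = ereal r" "r \<ge> 1"
  using assms by (cases p) auto

lemma abs_le_lp_norm:
  assumes "finite I" "i \<in> I" "1 \<le> p"
  shows "\<bar>f i\<bar> \<le> lp_norm p I f"
  using assms(3)
proof (cases rule: ereal_ge1_cases)
  case 1
  then show ?thesis using assms by (simp add: lp_norm_def)
next
  case (2 r)
  have "\<bar>f i\<bar> = (\<bar>f i\<bar> powr r) powr (1/r)"
    using 2 by (simp add: powr_powr)
  also have "\<dots> \<le> (\<Sum>i\<in>I. \<bar>f i\<bar> powr r) powr (1/r)"
    by (rule powr_mono2) (use 2 assms in \<open>auto intro: member_le_sum\<close>)
  finally show ?thesis using 2 by (simp add: lp_norm_def)
qed

lemma lp_norm_nonneg:
  assumes "finite I" "I \<noteq> {}" "1 \<le> p"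
  shows "0 \<le> lp_norm p I f"
  using assms abs_le_lp_norm[of I _ p f] by (meson abs_ge_zero all_not_in_conv order_trans)

lemma vec_pnorm_nonneg: "1 \<le> p \<Longrightarrow> 0 \<le> vec_pnorm p v"
  by (simp add: vec_pnorm_def lp_norm_nonneg)

lemma lp_norm_scale_le:
  assumes "finite I" "I \<noteq> {}" "1 \<le> p" "t > 0"
  shows "lp_norm p I (\<lambda>i. t * f i) \<le> t * lp_norm p I f"
  using assms(3)
proof (cases rule: ereal_ge1_cases)
  case 1
  have "Max ((\<lambda>i. \<bar>t * f i\<bar>) ` I) \<le> t * Max ((\<lambda>i. \<bar>f i\<bar>) ` I)"
    using assms by (subst Max_le_iff) (auto simp: abs_mult intro!: mult_left_mono)
  then show ?thesis using 1 by (simp add: lp_norm_def)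
next
  case (2 r)
  have "(\<Sum>i\<in>I. \<bar>t * f i\<bar> powr r) = t powr r * (\<Sum>i\<in>I. \<bar>f i\<bar> powr r)"
    using assms by (simp add: abs_mult powr_mult sum_distrib_left)
  then have "(\<Sum>i\<in>I. \<bar>t * f i\<bar> powr r) powr (1/r)
      = (t powr r) powr (1/r) * (\<Sum>i\<in>I. \<bar>f i\<bar> powr r) powr (1/r)"
    by (simp add: powr_mult sum_nonneg)
  also have "(t powr r) powr (1/r) = t" using 2 assms by (simp add: powr_powr)
  finally show ?thesis using 2 by (simp add: lp_norm_def)
qed

lemma lp_norm_le_1_iff:
  assumes "r > 0"
  shows "lp_norm (ereal r) I f \<le> 1 \<longleftrightarrow> (\<Sum>i\<in>I. \<bar>f i\<bar> powr r) \<le> 1"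
proof -
  define S where "S = (\<Sum>i\<in>I. \<bar>f i\<bar> powr r)"
  have "S \<ge> 0" unfolding S_def by (simp add: sum_nonneg)
  then have "S powr (1/r) \<le> 1 \<longleftrightarrow> S \<le> 1"
    using assms powr_less_mono2[of "1/r" 1 S] powr_mono2[of "1/r" S 1]
    by (smt (verit) divide_pos_pos powr_one_eq_one)
  then show ?thesis unfolding S_def by (simp add: lp_norm_def)
qed

lemma closed_vec_pnorm_le_1:
  assumes "1 \<le> p"
  shows "closed {v::real^'m. vec_pnorm p v \<le> 1}"
  using assms
proof (cases rule: ereal_ge1_cases)
  case 1
  then have "{v::real^'m. vec_pnorm p v \<le> 1} = (\<Inter>i. {v. \<bar>v $ i\<bar> \<le> 1})"
    by (auto simp: vec_pnorm_def lp_norm_def)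
  then show ?thesis by (auto intro!: closed_Collect_le continuous_intros)
next
  case (2 r)
  then have "{v::real^'m. vec_pnorm p v \<le> 1} = {v. (\<Sum>i\<in>UNIV. \<bar>v $ i\<bar> powr r) \<le> 1}"
    by (simp add: vec_pnorm_def lp_norm_le_1_iff)
  then show ?thesis
    using 2 by (auto intro!: closed_Collect_le continuous_intros continuous_on_powr')
qed

text \<open>The \<open>\<ell>\<^sub>p\<close> norm \<open>k\<^sup>1\<^sup>/\<^sup>p\<close> of the all-ones vector of length \<open>k\<close>.\<close>
definition card_root :: "ereal \<Rightarrow> nat \<Rightarrow> real" where
  "card_root p k = (if p = \<infinity> then 1 else real k powr (1 / real_of_ereal p))"

lemma lp_norm_le_card_root:
  assumes "finite I" "I \<noteq> {}" "1 \<le> p" "\<And>i. i \<in> I \<Longrightarrow> \<bar>f i\<bar> \<le> s"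
  shows "lp_norm p I f \<le> card_root p (card I) * s"
  using assms(3)
proof (cases rule: ereal_ge1_cases)
  case 1
  then show ?thesis using assms by (auto simp: lp_norm_def card_root_def)
next
  case (2 r)
  have "s \<ge> 0" using assms by force
  have "(\<Sum>i\<in>I. \<bar>f i\<bar> powr r) powr (1/r) \<le> (\<Sum>i\<in>I. s powr r) powr (1/r)"
    using assms 2 by (intro powr_mono2 sum_mono) (auto intro: sum_nonneg)
  also have "\<dots> = real (card I) powr (1/r) * s"
    using 2 \<open>s \<ge> 0\<close> by (simp add: powr_mult powr_powr)
  finally show ?thesis using 2 by (simp add: lp_norm_def card_root_def)
qed

lemma one_le_dual_exp:
  assumes "1 \<le> p"
  shows "1 \<le> dual_exp p"
  using assms
proof (cases rule: ereal_ge1_cases)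
  case (2 r)
  then show ?thesis by (cases "r = 1") (auto simp: dual_exp_def field_simps)
qed (simp add: dual_exp_def)

lemma card_root_mult_dual:
  assumes "1 \<le> p"
  shows "card_root p k * card_root (dual_exp p) k = real k"
  using assms
proof (cases rule: ereal_ge1_cases)
  case (2 r)
  show ?thesis
  proof (cases "r = 1")
    case False
    with 2 have "r > 1" by simp
    then have "1/r + 1 / (r / (r - 1)) = 1" by (simp add: field_simps)
    then show ?thesis
      using 2 \<open>r > 1\<close> by (simp add: card_root_def dual_exp_def flip: powr_add)
  qed (use 2 in \<open>simp add: card_root_def dual_exp_def\<close>)
qed (simp add: card_root_def dual_exp_def)

lemma entry_pnorm_le_card_root:
  fixes U :: "real^'n^'m"
  assumes "1 \<le> p" and columns: "\<And>j. vec_pnorm p (column j U) \<le> 1"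
  shows "entry_pnorm p U \<le> card_root p CARD('n)"
  using assms(1)
proof (cases rule: ereal_ge1_cases)
  case 1
  have "\<bar>U $ i $ j\<bar> \<le> 1" for i j
    using abs_le_lp_norm[of UNIV i p "\<lambda>i. column j U $ i"] columns[of j] assms(1)
    by (simp add: vec_pnorm_def column_def)
  then show ?thesis
    using 1 by (auto simp: entry_pnorm_def lp_norm_def card_root_def)
next
  case (2 r)
  have column_sum: "(\<Sum>i\<in>UNIV. \<bar>U $ i $ j\<bar> powr r) \<le> 1" for j
    using columns[of j] 2 by (simp add: vec_pnorm_def column_def lp_norm_le_1_iff)
  have "(\<Sum>(i, j)\<in>UNIV. \<bar>U $ i $ j\<bar> powr r) = (\<Sum>i\<in>UNIV. \<Sum>j\<in>UNIV. \<bar>U $ i $ j\<bar> powr r)"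
    by (simp add: sum.cartesian_product case_prod_unfold)
  also have "\<dots> = (\<Sum>j\<in>UNIV. \<Sum>i\<in>UNIV. \<bar>U $ i $ j\<bar> powr r)"
    by (rule sum.swap)
  also have "\<dots> \<le> real CARD('n)"
    using sum_mono[of UNIV _ "\<lambda>_. 1", OF column_sum] by simp
  finally have "(\<Sum>(i, j)\<in>UNIV. \<bar>U $ i $ j\<bar> powr r) powr (1/r) \<le> real CARD('n) powr (1/r)"
    using 2 by (intro powr_mono2) (auto intro: sum_nonneg)
  then show ?thesis
    using 2 by (simp add: entry_pnorm_def lp_norm_def card_root_def case_prod_unfold)
qed

lemma conditioned_card_roots:
  fixes U :: "real^'n^'m"
  assumes "1 \<le> p"
    and "\<And>j. vec_pnorm p (column j U) \<le> 1"
    and coordinates: "\<And>z j. \<bar>z $ j\<bar> \<le> vec_pnorm p (U *v z)"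
  shows "conditioned (card_root p CARD('n)) (card_root (dual_exp p) CARD('n)) p U"
proof -
  have "vec_pnorm (dual_exp p) z \<le> card_root (dual_exp p) CARD('n) * vec_pnorm p (U *v z)"
    for z :: "real^'n"
    unfolding vec_pnorm_def
    by (rule lp_norm_le_card_root[of UNIV, simplified])
      (use one_le_dual_exp[OF assms(1)] coordinates in \<open>auto simp: vec_pnorm_def\<close>)
  then show ?thesis
    using entry_pnorm_le_card_root assms by (auto simp: conditioned_def)
qed

lemma cond_number_le:
  fixes M :: "real^'n^'m"
  assumes "1 \<le> p" "conditioned \<alpha> \<beta> p M"
  shows "cond_number p M \<le> \<alpha> * \<beta>"
proof -
  have "0 \<le> \<alpha>' * \<beta>'" if "conditioned \<alpha>' \<beta>' p M" for \<alpha>' \<beta>'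
  proof -
    have "0 \<le> \<alpha>'"
      using that lp_norm_nonneg[of "UNIV :: ('m \<times> 'n) set" p "\<lambda>(i, j). M $ i $ j"] assms(1)
      unfolding conditioned_def entry_pnorm_def by simp
    define ones :: "real^'n" where "ones = (\<chi> j. 1)"
    have "1 \<le> vec_pnorm (dual_exp p) ones"
      using abs_le_lp_norm[of "UNIV :: 'n set" _ "dual_exp p" "\<lambda>_. 1"] one_le_dual_exp[OF assms(1)]
      by (simp add: vec_pnorm_def ones_def)
    also have "\<dots> \<le> \<beta>' * vec_pnorm p (M *v ones)"
      using that by (simp add: conditioned_def)
    finally have "0 < \<beta>'"
      using vec_pnorm_nonneg[OF assms(1), of "M *v ones"]
      by (smt (verit) mult_nonpos_nonneg)
    with \<open>0 \<le> \<alpha>'\<close> show ?thesis by simp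
  qed
  then have "bdd_below {\<alpha> * \<beta> | \<alpha> \<beta>. conditioned \<alpha> \<beta> p M}"
    by (auto intro: bdd_belowI[of _ 0])
  then show ?thesis
    unfolding cond_number_def using assms(2) by (auto intro: cInf_lower)
qed

locale auerbach =
  fixes A :: "real^'n^'m" and N :: "real^'m \<Rightarrow> real"
  assumes N_scale_le: "t > 0 \<Longrightarrow> N (t *\<^sub>R v) \<le> t * N v"
    and abs_le_N: "\<bar>v $ i\<bar> \<le> N v"
    and closed_N_le_1: "closed {v. N v \<le> 1}"
    and inj_A: "inj ((*v) A)"
begin

definition admissible :: "(real^'n^'n) set" where
  "admissible = {C. \<forall>j. N (A *v column j C) \<le> 1}"

lemma N_nonneg: "0 \<le> N v"
  using abs_le_N[of v] abs_ge_zero order_trans by blast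

lemma bounded_N_le_1: "bounded {x. N (A *v x) \<le> 1}"
proof -
  obtain B where "B > 0" and B: "\<And>x. B * norm x \<le> norm (A *v x)"
    using linear_inj_bounded_below_pos[of "(*v) A"] inj_A matrix_vector_mul_linear by blast
  have "norm x \<le> real CARD('m) / B" if "N (A *v x) \<le> 1" for x
  proof -
    have "B * norm x \<le> (\<Sum>i\<in>UNIV. \<bar>(A *v x) $ i\<bar>)"
      using B norm_le_l1_cart order_trans by blast
    also have "\<dots> \<le> (\<Sum>i\<in>(UNIV::'m set). 1)"
      by (rule sum_mono) (meson abs_le_N order_trans that)
    finally show ?thesis using \<open>B > 0\<close> by (simp add: field_simps)
  qed
  then show ?thesis unfolding bounded_iff by blast
qed

lemma compact_admissible: "compact admissible"
proof -
  have "admissible = (\<Inter>j. (\<lambda>C. A *v column j C) -` {v. N v \<le> 1})"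
    unfolding admissible_def by auto
  moreover have "closed ((\<lambda>C::real^'n^'n. A *v column j C) -` {v. N v \<le> 1})" for j
    by (rule closed_vimage[OF closed_N_le_1])
      (unfold matrix_vector_mult_def column_def, intro continuous_intros)
  ultimately have "closed admissible" by auto
  obtain b where b: "\<And>x. N (A *v x) \<le> 1 \<Longrightarrow> norm x \<le> b"
    using bounded_N_le_1 unfolding bounded_iff by blast
  have "norm C \<le> real CARD('n) * real CARD('n) * b" if "C \<in> admissible" for C
  proof -
    have entry: "\<bar>C $ i $ j\<bar> \<le> b" for i j
      using component_le_norm_cart[of "column j C" i] b[of "column j C"] that
      by (fastforce simp: admissible_def column_def)
    have "norm C \<le> (\<Sum>i\<in>UNIV. norm (C $ i))"
      unfolding norm_vec_def by (rule L2_set_le_sum) simp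
    also have "\<dots> \<le> (\<Sum>i\<in>(UNIV::'n set). \<Sum>j\<in>(UNIV::'n set). \<bar>C $ i $ j\<bar>)"
      by (intro sum_mono norm_le_l1_cart)
    also have "\<dots> \<le> (\<Sum>i\<in>(UNIV::'n set). \<Sum>j\<in>(UNIV::'n set). b)"
      by (intro sum_mono entry)
    finally show ?thesis by simp
  qed
  then have "bounded admissible" unfolding bounded_iff by blast
  with \<open>closed admissible\<close> show ?thesis by (simp add: compact_eq_bounded_closed)
qed

lemma admissible_column_update:
  assumes "C \<in> admissible" "N (A *v v) \<le> 1"
  shows "(\<chi> i j. if j = k then v $ i else C $ i $ j) \<in> admissible"
proof -
  have "column j (\<chi> i j. if j = k then v $ i else C $ i $ j) = (if j = k then v else column j C)" for j
    by (simp add: column_def vec_eq_iff)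
  then show ?thesis using assms by (simp add: admissible_def)
qed

lemma admissible_nonsingular: "\<exists>D\<in>admissible. det D \<noteq> 0"
proof -
  define M where "M = 1 + (\<Sum>j\<in>UNIV. N (A *v axis j 1))"
  have "M \<ge> 1" unfolding M_def by (simp add: N_nonneg sum_nonneg)
  define t where "t = 1 / M"
  have "t > 0" using \<open>M \<ge> 1\<close> by (simp add: t_def)
  have "N (A *v column j (mat t)) \<le> 1" for j
  proof -
    have "column j (mat t) = t *\<^sub>R axis j 1"
      by (simp add: column_def mat_def axis_def vec_eq_iff)
    then have "N (A *v column j (mat t)) \<le> t * N (A *v axis j 1)"
      using N_scale_le[OF \<open>t > 0\<close>] by (simp add: matrix_vector_mult_scaleR)
    also have "\<dots> \<le> t * M"
      using \<open>t > 0\<close> member_le_sum[of j UNIV "\<lambda>j. N (A *v axis j 1)"] N_nonneg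
      by (simp add: M_def)
    also have "\<dots> = 1"
      using \<open>M \<ge> 1\<close> by (simp add: t_def)
    finally show ?thesis .
  qed
  moreover have "det (mat t :: real^'n^'n) \<noteq> 0"
    using \<open>t > 0\<close> by (subst det_diagonal) (auto simp: mat_def)
  ultimately show ?thesis unfolding admissible_def by blast
qed

lemma abs_coordinate_le_N_of_max_det:
  assumes "C \<in> admissible" and max_det: "\<And>D. D \<in> admissible \<Longrightarrow> \<bar>det D\<bar> \<le> \<bar>det C\<bar>"
    and "det C \<noteq> 0"
  shows "\<bar>z $ k\<bar> \<le> N (A *v (C *v z))"
proof (cases "N (A *v (C *v z)) = 0")
  case True
  then have "A *v (C *v z) = 0"
    using abs_le_N[of "A *v (C *v z)"] by (simp add: vec_eq_iff)
  then have "z = 0"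
    using inj_A inj_matrix_vector_mult[where A = C] \<open>det C \<noteq> 0\<close>
    by (metis inj_eq invertible_det_nz matrix_vector_mult_0_right)
  then show ?thesis using N_nonneg by simp
next
  case False
  define s where "s = N (A *v (C *v z))"
  have "s > 0" using False N_nonneg[of "A *v (C *v z)"] by (simp add: s_def)
  have "N (A *v (C *v ((1/s) *\<^sub>R z))) \<le> (1/s) * s"
    using N_scale_le[of "1/s" "A *v (C *v z)"] \<open>s > 0\<close>
    by (simp add: s_def matrix_vector_mult_scaleR)
  then have "N (A *v (C *v ((1/s) *\<^sub>R z))) \<le> 1" using \<open>s > 0\<close> by simp
  text \<open>By Cramer's rule, replacing column \<open>k\<close> of \<open>C\<close> by \<open>C (z/s)\<close> multiplies
    the determinant by \<open>z\<^sub>k/s\<close>; maximality of \<open>\<bar>det C\<bar>\<close> bounds this factor by 1.\<close>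
  let ?E = "\<chi> i j. if j = k then (C *v ((1/s) *\<^sub>R z)) $ i else C $ i $ j"
  have "\<bar>det ?E\<bar> \<le> \<bar>det C\<bar>"
    by (rule max_det, rule admissible_column_update) fact+
  moreover have "det ?E = (1/s) * z $ k * det C"
    by (simp add: cramer_lemma matrix_vector_mult_scaleR)
  ultimately have "\<bar>z $ k\<bar> / s * \<bar>det C\<bar> \<le> 1 * \<bar>det C\<bar>"
    using \<open>s > 0\<close> by (simp add: abs_mult)
  then show ?thesis
    using \<open>det C \<noteq> 0\<close> \<open>s > 0\<close> by (simp add: s_def field_simps)
qed

theorem exists_auerbach_basis:
  "\<exists>C :: real^'n^'n. invertible C \<and> (\<forall>j. N (A *v column j C) \<le> 1) \<and> (\<forall>z j. \<bar>z $ j\<bar> \<le> N (A *v (C *v z)))"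
proof -
  obtain D where "D \<in> admissible" "det D \<noteq> 0"
    using admissible_nonsingular by blast
  moreover have "continuous_on admissible (\<lambda>C. \<bar>det C\<bar>)"
    unfolding det_def by (intro continuous_intros)
  ultimately obtain C where "C \<in> admissible" and max_det: "\<And>D. D \<in> admissible \<Longrightarrow> \<bar>det D\<bar> \<le> \<bar>det C\<bar>"
    using continuous_attains_sup[OF compact_admissible] by blast
  with \<open>D \<in> admissible\<close> \<open>det D \<noteq> 0\<close> have "det C \<noteq> 0" by fastforce
  then have "invertible C" by (simp add: invertible_det_nz)
  moreover have "\<bar>z $ j\<bar> \<le> N (A *v (C *v z))" for z j
    using \<open>C \<in> admissible\<close> max_det \<open>det C \<noteq> 0\<close> by (rule abs_coordinate_le_N_of_max_det)
  ultimately show ?thesis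
    using \<open>C \<in> admissible\<close> unfolding admissible_def by blast
qed

end

lemma auerbach_vec_pnorm:
  fixes A :: "real^'n^'m"
  assumes "rank A = CARD('n)" "1 \<le> p"
  shows "auerbach A (vec_pnorm p)"
proof
  show "vec_pnorm p (t *\<^sub>R v) \<le> t * vec_pnorm p v" if "t > 0" for t and v :: "real^'m"
    using lp_norm_scale_le[of UNIV p t "\<lambda>i. v $ i"] assms(2) that by (simp add: vec_pnorm_def)
  show "\<bar>v $ i\<bar> \<le> vec_pnorm p v" for v :: "real^'m" and i
    using abs_le_lp_norm[of UNIV i p "\<lambda>i. v $ i"] assms(2) by (simp add: vec_pnorm_def)
  show "closed {v::real^'m. vec_pnorm p v \<le> 1}"
    using assms(2) by (rule closed_vec_pnorm_le_1)
  show "inj ((*v) A)"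
    using assms(1) full_rank_injective by blast
qed

lemma matrix_inv_eqI:
  fixes A :: "'a::semiring_1^'n^'m"
  assumes "A ** B = mat 1" "B ** A = mat 1"
  shows "matrix_inv A = B"
proof -
  have inverse: "A ** matrix_inv A = mat 1 \<and> matrix_inv A ** A = mat 1"
    unfolding matrix_inv_def by (rule someI[of _ B]) (use assms in blast)
  have "matrix_inv A = (B ** A) ** matrix_inv A" by (simp add: assms(2) matrix_mul_lid)
  also have "\<dots> = B" using inverse by (simp add: matrix_mul_assoc[symmetric] matrix_mul_rid)
  finally show ?thesis .
qed

lemma invertible_matrix_inv:
  fixes A :: "'a::semiring_1^'n^'m"
  assumes "invertible A"
  shows "invertible (matrix_inv A)" and "matrix_inv (matrix_inv A) = A"
proof -
  obtain B where "A ** B = mat 1" "B ** A = mat 1"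
    using assms unfolding invertible_def by blast
  then have "matrix_inv A = B" by (rule matrix_inv_eqI)
  with \<open>A ** B = mat 1\<close> \<open>B ** A = mat 1\<close>
  show "invertible (matrix_inv A)" "matrix_inv (matrix_inv A) = A"
    by (auto simp: invertible_def intro: matrix_inv_eqI)
qed

lemma column_matrix_matrix_mult: "column j (A ** C) = A *v column j C"
  by (simp add: vec_eq_iff column_def matrix_matrix_mult_def matrix_vector_mult_def)

theorem mainTheorem2:
  fixes A :: "real^'n^'m" and p :: ereal
  assumes "rank A = CARD('n)"
    and "1 \<le> p"
  shows "\<exists>R :: real^'n^'n. invertible R \<and>
           cond_number p (A ** matrix_inv R) \<le> real CARD('n)"
proof -
  interpret auerbach A "vec_pnorm p"
    using assms by (rule auerbach_vec_pnorm)
  obtain C :: "real^'n^'n" where "invertible C"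
    and columns: "\<And>j. vec_pnorm p (A *v column j C) \<le> 1"
    and coordinates: "\<And>z j. \<bar>z $ j\<bar> \<le> vec_pnorm p (A *v (C *v z))"
    using exists_auerbach_basis by blast
  have "conditioned (card_root p CARD('n)) (card_root (dual_exp p) CARD('n)) p (A ** C)"
    using assms(2) columns coordinates
    by (intro conditioned_card_roots) (simp_all add: column_matrix_matrix_mult matrix_vector_mul_assoc)
  then have "cond_number p (A ** C) \<le> real CARD('n)"
    using cond_number_le card_root_mult_dual assms(2) by metis
  then show ?thesis
    using invertible_matrix_inv[OF \<open>invertible C\<close>] by metis
qed

end
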